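(* There is an RB-function $f_{scc}$ with the following property: for every conservative $d$-dim Petri net $A$, every bottom SCC $X$ of $A$, and every $I\subseteq[1,d]$, writing $G=G_{(X,I)}=(Q,A,E)$ and $J=[1,d]\setminus I$, if there is $x\in X$ with $x(j)\geq f_{scc}(\|G\|,d)$ for all $j\in J$, then $G$ is proper.
   Context: A $d$-dim Petri net $A$ is a finite set of actions $(a_-,a_+)\in\mathbb{N}^d\times\mathbb{N}^d$; $\|A\|$ is the maximum of all entries of all $a_-,a_+$. Steps $x\xrightarrow{a}y$ iff $x=c+a_-$, $y=c+a_+$ for some $c\in\mathbb{N}^d$; $\xrightarrow{*}$ is the reflexive-transitive closure. $A$ is conservative if some $w\in(\mathbb{N}_+)^d$ has $\langle a_+-a_-,w\rangle=0$ for all actions. A bottom SCC of a net is a nonempty set $X$ of configurations with $\{y\mid x\xrightarrow{*}y\}=X$ for all $x\in X$. For $I\subseteq[1,d]$ and $x\in\mathbb{Z}^d$, $x|_I$ is the restriction to components in $I$; $X|_I=\{x|_I\mid x\in X\}$; $A|_I$ is the $|I|$-dim net with actions $((a_-)|_I,(a_+)|_I)$. The Petri net with states $G_{(X,I)}=(Q,A,E)$ has state set $Q=X|_I$ and edges $E=\{(p,a,q)\in Q\times A\times Q\mid p\xrightarrow{a}q\text{ in }A|_I\}$; $\|G\|=\max\{\|Q\|,\|A\|\}$ where $\|Q\|$ is the maximal component of elements of $Q$. $G$ is proper if $Q$ is a bottom SCC of the net $A|_I$. A function $f:\mathbb{N}^2\to\mathbb{N}$ is an RB-function if there are $c\in\mathbb{N}$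 and a polynomial $p$ with $f(m,d)\leq(c+m)^{2^{p(d)}}$ for all $m,d$. *)

theory Defs
  imports "HOL-Computational_Algebra.Polynomial"
begin

text \<open>Components are indexed by naturals; the index set [1,d] of the paper
is rendered as {0..<d}. A vector in N^S (S a finite index set) is a function
nat => nat vanishing outside S. An action is a pair (a_minus, a_plus) of such vectors.\<close>

type_synonym vec = "nat \<Rightarrow> nat"
type_synonym action = "vec \<times> vec"

definition configs :: "nat set \<Rightarrow> vec set" where
  "configs S = {x. \<forall>i. i \<notin> S \<longrightarrow> x i = 0}"

definition petri_net :: "nat \<Rightarrow> action set \<Rightarrow> bool" where
  "petri_net d A \<longleftrightarrow> finite A \<and>
     (\<forall>(am, ap)\<in>A. am \<in> configs {..<d} \<and> ap \<in> configs {..<d})"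

definition step :: "action set \<Rightarrow> vec \<Rightarrow> vec \<Rightarrow> bool" where
  "step A x y \<longleftrightarrow> (\<exists>(am, ap)\<in>A. \<exists>c. x = (\<lambda>i. c i + am i) \<and> y = (\<lambda>i. c i + ap i))"

definition reach :: "action set \<Rightarrow> vec \<Rightarrow> vec \<Rightarrow> bool" where
  "reach A = (step A)\<^sup>*\<^sup>*"

definition conservative :: "nat \<Rightarrow> action set \<Rightarrow> bool" where
  "conservative d A \<longleftrightarrow> (\<exists>w::nat \<Rightarrow> nat. (\<forall>i<d. w i > 0) \<and>
     (\<forall>(am, ap)\<in>A. (\<Sum>i<d. (int (ap i) - int (am i)) * int (w i)) = 0))"

definition bottom_scc :: "vec set \<Rightarrow> action set \<Rightarrow> vec set \<Rightarrow> bool" where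
  "bottom_scc C A X \<longleftrightarrow> X \<noteq> {} \<and> X \<subseteq> C \<and>
     (\<forall>x\<in>X. {y \<in> C. reach A x y} = X)"

definition restr :: "nat set \<Rightarrow> vec \<Rightarrow> vec" where
  "restr I x = (\<lambda>i. if i \<in> I then x i else 0)"

definition restrict_net :: "nat set \<Rightarrow> action set \<Rightarrow> action set" where
  "restrict_net I A = (\<lambda>(am, ap). (restr I am, restr I ap)) ` A"

definition norm_net :: "nat \<Rightarrow> action set \<Rightarrow> nat" where
  "norm_net d A = Max ({0} \<union> {am i |am ap i. (am, ap) \<in> A \<and> i < d}
                         \<union> {ap i |am ap i. (am, ap) \<in> A \<and> i < d})"

definition states :: "vec set \<Rightarrow> nat set \<Rightarrow> vec set" where
  "states X I = restr I ` X"

definition norm_states :: "nat set \<Rightarrow> vec set \<Rightarrow> nat" where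
  "norm_states I Q = Max ({0} \<union> {q i |q i. q \<in> Q \<and> i \<in> I})"

definition norm_G :: "nat \<Rightarrow> action set \<Rightarrow> vec set \<Rightarrow> nat set \<Rightarrow> nat" where
  "norm_G d A X I = max (norm_states I (states X I)) (norm_net d A)"

text \<open>Edges of G_(X,I) (not needed for properness, included for completeness).\<close>
definition edges :: "action set \<Rightarrow> vec set \<Rightarrow> nat set \<Rightarrow> (vec \<times> action \<times> vec) set" where
  "edges A X I = {(p, a, q). p \<in> states X I \<and> q \<in> states X I \<and> a \<in> A \<and>
                      step {(restr I (fst a), restr I (snd a))} p q}"

definition proper :: "action set \<Rightarrow> vec set \<Rightarrow> nat set \<Rightarrow> bool" where
  "proper A X I \<longleftrightarrow> bottom_scc (configs I) (restrict_net I A) (states X I)"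

definition RB_function :: "(nat \<Rightarrow> nat \<Rightarrow> nat) \<Rightarrow> bool" where
  "RB_function f \<longleftrightarrow> (\<exists>(c::nat) (p::nat poly). \<forall>m d. f m d \<le> (c + m) ^ (2 ^ poly p d))"

end

theory Submission
  imports Defs "HOL-Library.FuncSet"
begin

text \<open>Conservativity bounds a positive weighted sum of the components, so the bottom SCC X is
finite, and so is Q = X|_I. Projecting runs inside X shows that Q is strongly connected for A|_I;
it remains to show that Q is closed under steps of A|_I. Every state of Q is reached from x0|_I
by a path inside Q of length at most |Q|^2. Such a path, followed by one more step, lifts to a run
of A from x0: each step lowers a component outside I by at most ||A||, and these components start
above (|Q|^2 + 1) ||A||. The run stays in X, so the target of the step lies in Q. Finally
|Q| <= (||G|| + 1)^d, which yields the threshold (||G|| + 2)^(2d + 2).\<close>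

definition config_box :: "nat set \<Rightarrow> nat \<Rightarrow> vec set" where
  "config_box S K = {y \<in> configs S. \<forall>i\<in>S. y i \<le> K}"

lemma inj_on_restrict_config_box: "inj_on (\<lambda>y. restrict y S) (config_box S K)"
proof (rule inj_onI)
  fix x y assume x: "x \<in> config_box S K" and y: "y \<in> config_box S K"
    and eq: "restrict x S = restrict y S"
  show "x = y"
  proof
    fix i show "x i = y i"
      using x y fun_cong[OF eq, of i] unfolding config_box_def configs_def by (cases "i \<in> S") auto
  qed
qed

lemma restrict_config_box_subset: "(\<lambda>y. restrict y S) ` config_box S K \<subseteq> S \<rightarrow>\<^sub>E {..K}"
  unfolding config_box_def by auto

lemma finite_config_box: "finite S \<Longrightarrow> finite (config_box S K)"
proof -
  assume "finite S"
  then have "finite ((\<lambda>y. restrict y S) ` config_box S K)"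
    by (blast intro: finite_subset[OF restrict_config_box_subset] finite_PiE)
  then show ?thesis using finite_imageD inj_on_restrict_config_box by blast
qed

lemma card_config_box_le:
  assumes "finite S"
  shows "card (config_box S K) \<le> (K + 1) ^ card S"
proof -
  have "card (config_box S K) = card ((\<lambda>y. restrict y S) ` config_box S K)"
    using card_image[OF inj_on_restrict_config_box] by simp
  also have "\<dots> \<le> card (S \<rightarrow>\<^sub>E {..K})"
    using assms by (intro card_mono restrict_config_box_subset) (simp add: finite_PiE)
  also have "\<dots> = (K + 1) ^ card S"
    using assms by (simp add: card_PiE)
  finally show ?thesis .
qed

lemma norm_net_ge:
  assumes "petri_net d A" "(am, ap) \<in> A" "i < d"
  shows "am i \<le> norm_net d A" "ap i \<le> norm_net d A"
proof -
  let ?Am = "{am i |am ap i. (am, ap) \<in> A \<and> i < d}"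
  let ?Ap = "{ap i |am ap i. (am, ap) \<in> A \<and> i < d}"
  have fin: "finite (A \<times> {..<d})" using assms(1) unfolding petri_net_def by simp
  have "?Am \<subseteq> (\<lambda>(a, i). fst a i) ` (A \<times> {..<d})" by force
  then have "finite ?Am" using fin by (rule finite_subset[OF _ finite_imageI])
  have "?Ap \<subseteq> (\<lambda>(a, i). snd a i) ` (A \<times> {..<d})" by force
  then have "finite ?Ap" using fin by (rule finite_subset[OF _ finite_imageI])
  then have fin_all: "finite ({0} \<union> ?Am \<union> ?Ap)" using \<open>finite ?Am\<close> by simp
  show "am i \<le> norm_net d A" "ap i \<le> norm_net d A"
    unfolding norm_net_def using assms(2,3) by (intro Max_ge[OF fin_all]; blast)+
qed

lemma norm_states_ge:
  assumes "finite I" "finite Q" "q \<in> Q" "i \<in> I"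
  shows "q i \<le> norm_states I Q"
proof -
  have "finite {q i |q i. q \<in> Q \<and> i \<in> I}"
    using finite_image_set2[of "\<lambda>q. q \<in> Q" "\<lambda>i. i \<in> I" "\<lambda>q i. q i"] assms(1,2) by simp
  then show ?thesis
    unfolding norm_states_def using assms(3,4) by (intro Max_ge) blast+
qed

lemma card_le_norm_states:
  assumes "finite I" "finite Q" "Q \<subseteq> configs I"
  shows "card Q \<le> (norm_states I Q + 1) ^ card I"
proof -
  have "Q \<subseteq> config_box I (norm_states I Q)"
    unfolding config_box_def using assms by (auto intro: norm_states_ge)
  then have "card Q \<le> card (config_box I (norm_states I Q))"
    using assms(1) by (intro card_mono finite_config_box)
  also have "\<dots> \<le> (norm_states I Q + 1) ^ card I"
    using assms(1) by (rule card_config_box_le)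
  finally show ?thesis .
qed

lemma restr_in_configs: "restr I x \<in> configs I"
  unfolding restr_def configs_def by simp

lemma states_subset_configs: "states X I \<subseteq> configs I"
  unfolding states_def using restr_in_configs by blast

lemma stepI: "(am, ap) \<in> A \<Longrightarrow> step A (\<lambda>i. c i + am i) (\<lambda>i. c i + ap i)"
  unfolding step_def by blast

lemma step_configs:
  assumes "petri_net d A" "step A x y" "x \<in> configs {..<d}"
  shows "y \<in> configs {..<d}"
proof -
  obtain am ap c where "(am, ap) \<in> A" "x = (\<lambda>i. c i + am i)" "y = (\<lambda>i. c i + ap i)"
    using assms(2) unfolding step_def by auto
  moreover have "ap \<in> configs {..<d}" using assms(1) calculation(1) unfolding petri_net_def by auto
  ultimately show ?thesis using assms(3) unfolding configs_def by auto
qed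

lemma reach_configs:
  assumes "petri_net d A" "reach A x y" "x \<in> configs {..<d}"
  shows "y \<in> configs {..<d}"
  using assms(2,3) unfolding reach_def
  by (induction rule: rtranclp_induct) (auto intro: step_configs[OF assms(1)])

lemma step_restr: "step A x y \<Longrightarrow> step (restrict_net I A) (restr I x) (restr I y)"
proof -
  assume "step A x y"
  then obtain am ap c where a: "(am, ap) \<in> A" and "x = (\<lambda>i. c i + am i)" "y = (\<lambda>i. c i + ap i)"
    unfolding step_def by auto
  then have "restr I x = (\<lambda>i. restr I c i + restr I am i)" "restr I y = (\<lambda>i. restr I c i + restr I ap i)"
    unfolding restr_def by auto
  moreover have "(restr I am, restr I ap) \<in> restrict_net I A"
    using a unfolding restrict_net_def by force
  ultimately show ?thesis unfolding step_def by blast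
qed

lemma reach_restr: "reach A x y \<Longrightarrow> reach (restrict_net I A) (restr I x) (restr I y)"
  unfolding reach_def
  by (induction rule: rtranclp_induct) (auto intro: step_restr rtranclp.rtrancl_into_rtrancl)

lemma bottom_scc_reach: "bottom_scc C A X \<Longrightarrow> x \<in> X \<Longrightarrow> y \<in> X \<Longrightarrow> reach A x y"
  unfolding bottom_scc_def by blast

lemma bottom_scc_reach_closed:
  assumes "petri_net d A" "bottom_scc (configs {..<d}) A X" "x \<in> X" "reach A x y"
  shows "y \<in> X"
proof -
  have "x \<in> configs {..<d}" using assms(2,3) unfolding bottom_scc_def by blast
  with assms show ?thesis unfolding bottom_scc_def by (blast dest: reach_configs)
qed

lemma reach_restr_stays_in_states:
  assumes "petri_net d A" "bottom_scc (configs {..<d}) A X" "x \<in> X" "reach A x y"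
  shows "(restr I x, restr I y) \<in> (Restr {(p, q). step (restrict_net I A) p q} (states X I))\<^sup>*"
  using assms(4) unfolding reach_def
proof (induction rule: rtranclp_induct)
  case (step y z)
  then have "y \<in> X" "z \<in> X"
    using bottom_scc_reach_closed[OF assms(1-3)] unfolding reach_def
    by (meson rtranclp.rtrancl_into_rtrancl)+
  then have "(restr I y, restr I z) \<in> Restr {(p, q). step (restrict_net I A) p q} (states X I)"
    using step_restr[OF step(2)] unfolding states_def by blast
  with step(3) show ?case by (rule rtrancl_into_rtrancl)
qed simp

lemma step_weight_eq:
  assumes "\<forall>(am, ap)\<in>A. (\<Sum>i<d. (int (ap i) - int (am i)) * int (w i)) = 0" "step A x y"
  shows "(\<Sum>i<d. x i * w i) = (\<Sum>i<d. y i * w i)"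
proof -
  obtain am ap c where a: "(am, ap) \<in> A" and xy: "x = (\<lambda>i. c i + am i)" "y = (\<lambda>i. c i + ap i)"
    using assms(2) unfolding step_def by blast
  have "(\<Sum>i<d. (int (ap i) - int (am i)) * int (w i)) = 0"
    using assms(1) a by blast
  then have "int (\<Sum>i<d. am i * w i) = int (\<Sum>i<d. ap i * w i)"
    by (simp add: left_diff_distrib sum_subtractf)
  then have "(\<Sum>i<d. am i * w i) = (\<Sum>i<d. ap i * w i)"
    by (simp only: of_nat_eq_iff)
  then show ?thesis unfolding xy by (simp add: add_mult_distrib sum.distrib)
qed

lemma reach_weight_eq:
  assumes "\<forall>(am, ap)\<in>A. (\<Sum>i<d. (int (ap i) - int (am i)) * int (w i)) = 0" "reach A x y"
  shows "(\<Sum>i<d. x i * w i) = (\<Sum>i<d. y i * w i)"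
  using assms(2) unfolding reach_def
  by (induction rule: rtranclp_induct) (auto dest: step_weight_eq[OF assms(1)])

lemma finite_bottom_scc_if_conservative:
  assumes "conservative d A" "bottom_scc (configs {..<d}) A X"
  shows "finite X"
proof -
  obtain w where w_pos: "\<forall>i<d. w i > 0"
    and w_inv: "\<forall>(am, ap)\<in>A. (\<Sum>i<d. (int (ap i) - int (am i)) * int (w i)) = 0"
    using assms(1) unfolding conservative_def by blast
  obtain x0 where "x0 \<in> X" using assms(2) unfolding bottom_scc_def by auto
  have "X \<subseteq> config_box {..<d} (\<Sum>i<d. x0 i * w i)"
  proof
    fix y assume "y \<in> X"
    with \<open>x0 \<in> X\<close> assms(2) have y: "y \<in> configs {..<d}" "reach A x0 y"
      unfolding bottom_scc_def by blast+
    have "y i \<le> (\<Sum>i<d. x0 i * w i)" if "i < d" for i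
    proof -
      have "y i \<le> y i * w i" using w_pos that by (simp add: Suc_le_eq)
      also have "\<dots> \<le> (\<Sum>i<d. y i * w i)" using that by (intro member_le_sum) auto
      finally show ?thesis using reach_weight_eq[OF w_inv y(2)] by simp
    qed
    with y(1) show "y \<in> config_box {..<d} (\<Sum>i<d. x0 i * w i)" unfolding config_box_def by simp
  qed
  then show ?thesis using finite_config_box[of "{..<d}"] by (simp add: finite_subset)
qed

lemma rtrancl_Restr_imp_relpowp_bounded:
  assumes "finite Q" "(x, y) \<in> (Restr {(a, b). r a b} Q)\<^sup>*"
  shows "\<exists>n \<le> card Q ^ 2. (r ^^ n) x y"
proof -
  let ?R = "Restr {(a, b). r a b} Q"
  have "finite ?R" using assms(1) by (blast intro: finite_subset)
  then obtain n where "n \<le> card ?R" "(x, y) \<in> ?R ^^ n"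
    using assms(2) rtrancl_finite_eq_relpow by blast
  moreover have "card ?R \<le> card Q ^ 2"
    using assms(1) card_mono[of "Q \<times> Q" ?R] by (simp add: card_cartesian_product power2_eq_square)
  moreover have "((\<lambda>a b. (a, b) \<in> ?R) ^^ n) x y"
    using calculation(2) by (simp only: relpowp_relpow_eq)
  then have "(r ^^ n) x y" by (rule relpowp_mono[rotated]) blast
  ultimately show ?thesis by (blast intro: le_trans)
qed

lemma lift_step_restrict_net:
  assumes pn: "petri_net d A" and st: "step (restrict_net I A) (restr I x) p"
    and large: "\<forall>j\<in>{..<d} - I. norm_net d A \<le> x j"
  shows "\<exists>y. step A x y \<and> restr I y = p \<and> (\<forall>j\<in>{..<d} - I. x j \<le> y j + norm_net d A)"
proof -
  obtain am ap c where a: "(am, ap) \<in> A"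
    and x: "restr I x = (\<lambda>i. c i + restr I am i)" and p: "p = (\<lambda>i. c i + restr I ap i)"
    using st unfolding step_def restrict_net_def by auto
  have am_le: "am i \<le> x i" for i
  proof (cases "i \<in> I")
    case True
    then show ?thesis using fun_cong[OF x, of i] by (simp add: restr_def)
  next
    case False
    show ?thesis
    proof (cases "i < d")
      case True
      with False large have "norm_net d A \<le> x i" by blast
      with norm_net_ge(1)[OF pn a True] show ?thesis by (rule le_trans)
    next
      case False
      then have "am i = 0" using pn a unfolding petri_net_def configs_def by auto
      then show ?thesis by simp
    qed
  qed
  define y where "y = (\<lambda>i. x i - am i + ap i)"
  have "step A (\<lambda>i. (x i - am i) + am i) (\<lambda>i. (x i - am i) + ap i)"
    using a by (rule stepI)
  moreover have "(\<lambda>i. (x i - am i) + am i) = x" using am_le by auto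
  ultimately have "step A x y" unfolding y_def by simp
  moreover have "restr I y = p"
  proof
    fix i show "restr I y i = p i"
      using fun_cong[OF x, of i] unfolding restr_def y_def p by (cases "i \<in> I") auto
  qed
  moreover have "x j \<le> y j + norm_net d A" if "j \<in> {..<d} - I" for j
    using am_le[of j] norm_net_ge(1)[OF pn a, of j] that unfolding y_def by auto
  ultimately show ?thesis by blast
qed

lemma lift_relpowp_restrict_net:
  assumes pn: "petri_net d A" and "(step (restrict_net I A) ^^ n) (restr I x) p"
    and "\<forall>j\<in>{..<d} - I. n * norm_net d A \<le> x j"
  shows "\<exists>y. reach A x y \<and> restr I y = p"
  using assms(2,3)
proof (induction n arbitrary: x)
  case 0
  then show ?case unfolding reach_def by auto
next
  case (Suc n)
  obtain q where q: "step (restrict_net I A) (restr I x) q" "(step (restrict_net I A) ^^ n) q p"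
    using relpowp_Suc_D2[OF Suc.prems(1)] by blast
  have "\<forall>j\<in>{..<d} - I. norm_net d A \<le> x j"
    using Suc.prems(2) by (auto intro: le_trans[rotated])
  then obtain y1 where y1: "step A x y1" "restr I y1 = q"
    and y1_large: "\<forall>j\<in>{..<d} - I. x j \<le> y1 j + norm_net d A"
    using lift_step_restrict_net[OF pn q(1)] by blast
  have "\<forall>j\<in>{..<d} - I. n * norm_net d A \<le> y1 j"
  proof
    fix j assume "j \<in> {..<d} - I"
    with Suc.prems(2) y1_large have "Suc n * norm_net d A \<le> y1 j + norm_net d A"
      by (blast intro: le_trans)
    then show "n * norm_net d A \<le> y1 j" by simp
  qed
  with Suc.IH q(2) y1(2) obtain y where "reach A y1 y" "restr I y = p" by blast
  with y1(1) show ?case unfolding reach_def by (blast intro: converse_rtranclp_into_rtranclp)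
qed

lemma proper_if_large_on_complement:
  assumes pn: "petri_net d A" and bs: "bottom_scc (configs {..<d}) A X" and "finite X"
    and "x0 \<in> X" and large: "\<forall>j\<in>{..<d} - I. (card (states X I) ^ 2 + 1) * norm_net d A \<le> x0 j"
  shows "proper A X I"
proof -
  let ?B = "restrict_net I A"
  let ?Q = "states X I"
  have "finite ?Q" unfolding states_def using \<open>finite X\<close> by simp
  have step_closed: "z \<in> ?Q" if p: "p \<in> ?Q" and st: "step ?B p z" for p z
  proof -
    obtain xp where xp: "xp \<in> X" "p = restr I xp" using p unfolding states_def by blast
    have "(restr I x0, p) \<in> (Restr {(p, q). step ?B p q} ?Q)\<^sup>*"
      using reach_restr_stays_in_states[OF pn bs \<open>x0 \<in> X\<close> bottom_scc_reach[OF bs \<open>x0 \<in> X\<close> xp(1)]] xp(2)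
      by simp
    then obtain n where n: "n \<le> card ?Q ^ 2" "(step ?B ^^ n) (restr I x0) p"
      using rtrancl_Restr_imp_relpowp_bounded[OF \<open>finite ?Q\<close>] by blast
    then have "(step ?B ^^ Suc n) (restr I x0) z" using st by auto
    moreover have "\<forall>j\<in>{..<d} - I. Suc n * norm_net d A \<le> x0 j"
    proof
      fix j assume "j \<in> {..<d} - I"
      have "Suc n * norm_net d A \<le> (card ?Q ^ 2 + 1) * norm_net d A"
        using n(1) by (intro mult_le_mono1) simp
      also have "\<dots> \<le> x0 j" using large \<open>j \<in> {..<d} - I\<close> by blast
      finally show "Suc n * norm_net d A \<le> x0 j" .
    qed
    ultimately obtain y where "reach A x0 y" "restr I y = z" using lift_relpowp_restrict_net[OF pn] by blast
    then show "z \<in> ?Q" using bottom_scc_reach_closed[OF pn bs \<open>x0 \<in> X\<close>] unfolding states_def by blast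
  qed
  have reach_closed: "y \<in> ?Q" if "reach ?B q y" "q \<in> ?Q" for q y
    using that unfolding reach_def by (induction rule: rtranclp_induct) (auto intro: step_closed)
  have "{y \<in> configs I. reach ?B q y} = ?Q" if "q \<in> ?Q" for q
  proof
    show "{y \<in> configs I. reach ?B q y} \<subseteq> ?Q" using reach_closed that by blast
    show "?Q \<subseteq> {y \<in> configs I. reach ?B q y}"
    proof
      fix y assume "y \<in> ?Q"
      with that obtain xq xy where "xq \<in> X" "xy \<in> X" "q = restr I xq" "y = restr I xy"
        unfolding states_def by blast
      then show "y \<in> {y \<in> configs I. reach ?B q y}"
        using reach_restr[OF bottom_scc_reach[OF bs]] restr_in_configs by blast
    qed
  qed
  moreover have "?Q \<noteq> {}" using bs unfolding bottom_scc_def states_def by blast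
  ultimately show ?thesis unfolding proper_def bottom_scc_def using states_subset_configs by blast
qed

lemma threshold_le_power_norm_G:
  assumes "finite X" "I \<subseteq> {..<d}"
  shows "(card (states X I) ^ 2 + 1) * norm_net d A \<le> (norm_G d A X I + 2) ^ (2 * d + 2)"
proof -
  define m where "m = norm_G d A X I"
  have "finite I" using assms(2) finite_subset by blast
  have "card (states X I) \<le> (norm_states I (states X I) + 1) ^ card I"
    using card_le_norm_states[OF \<open>finite I\<close> _ states_subset_configs] assms(1)
    unfolding states_def by simp
  also have "\<dots> \<le> (m + 1) ^ card I"
    unfolding m_def norm_G_def by (intro power_mono) auto
  also have "\<dots> \<le> (m + 1) ^ d"
    using card_mono[OF _ assms(2)] by (intro power_increasing) auto
  also have "\<dots> \<le> (m + 2) ^ d"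
    by (intro power_mono) auto
  finally have "card (states X I) ^ 2 \<le> ((m + 2) ^ d) ^ 2"
    by (rule power_mono) simp
  also have "\<dots> = (m + 2) ^ (2 * d)"
    by (metis power_mult mult.commute)
  finally have "card (states X I) ^ 2 + 1 \<le> (m + 2) ^ (2 * d) * 2"
    using one_le_power[of "m + 2" "2 * d"] by linarith
  also have "\<dots> \<le> (m + 2) ^ (2 * d) * (m + 2)"
    by (intro mult_le_mono2) simp
  finally have "(card (states X I) ^ 2 + 1) * norm_net d A \<le> (m + 2) ^ (2 * d) * (m + 2) * (m + 2)"
    by (rule mult_le_mono) (simp add: m_def norm_G_def)
  also have "\<dots> = (m + 2) ^ (2 * d + 2)"
    by (simp only: power_add power2_eq_square mult.assoc)
  finally show ?thesis unfolding m_def .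
qed

lemma RB_function_add2_power: "RB_function (\<lambda>m d. (m + 2) ^ (2 * d + 2))"
  unfolding RB_function_def
proof (intro exI allI)
  fix m d :: nat
  have "2 * d + 2 \<le> 2 ^ (2 * d + 2)" using less_exp[of "2 * d + 2"] by linarith
  then have "(m + 2) ^ (2 * d + 2) \<le> (m + 2) ^ 2 ^ (2 * d + 2)"
    by (rule power_increasing) simp
  then have "(m + 2) ^ (2 * d + 2) \<le> (2 + m) ^ 2 ^ (2 * d + 2)"
    by (simp only: add.commute)
  moreover have "poly [:2, 2:] d = 2 * d + 2" by simp
  ultimately show "(m + 2) ^ (2 * d + 2) \<le> (2 + m) ^ 2 ^ poly [:2, 2:] d" by (simp only:)
qed

theorem proposition11:
  shows "\<exists>f_scc. RB_function f_scc \<and>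
    (\<forall>d A X I. petri_net d A \<longrightarrow> conservative d A \<longrightarrow> bottom_scc (configs {..<d}) A X \<longrightarrow>
       I \<subseteq> {..<d} \<longrightarrow>
       (\<exists>x\<in>X. \<forall>j\<in>{..<d} - I. f_scc (norm_G d A X I) d \<le> x j) \<longrightarrow>
       proper A X I)"
proof (intro exI conjI allI impI)
  show "RB_function (\<lambda>m d. (m + 2) ^ (2 * d + 2))" by (rule RB_function_add2_power)
  fix d A X I
  assume pn: "petri_net d A" and cs: "conservative d A" and bs: "bottom_scc (configs {..<d}) A X"
    and I: "I \<subseteq> {..<d}"
    and "\<exists>x\<in>X. \<forall>j\<in>{..<d} - I. (\<lambda>m d. (m + 2) ^ (2 * d + 2)) (norm_G d A X I) d \<le> x j"
  then obtain x0 where x0: "x0 \<in> X" "\<forall>j\<in>{..<d} - I. (norm_G d A X I + 2) ^ (2 * d + 2) \<le> x0 j"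
    by auto
  have "finite X" using finite_bottom_scc_if_conservative[OF cs bs] .
  with x0(2) I have "\<forall>j\<in>{..<d} - I. (card (states X I) ^ 2 + 1) * norm_net d A \<le> x0 j"
    using threshold_le_power_norm_G le_trans by blast
  then show "proper A X I" using proper_if_large_on_complement[OF pn bs \<open>finite X\<close> x0(1)] by blast
qed

end
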